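(* Let $X,X_1,X_2,\dots$ be i.i.d. positive random variables with $\mathbb{E}X=1$, let $p\ge2$ be an integer and $2<\alpha\le4$, and suppose $\mathbb{P}\{X\ge x\}=O(x^{-p-\alpha})$ as $x\to\infty$. Let $2\le r\le p$ and let $\gamma=(\gamma_1,\dots,\gamma_r)$ be positive integers with $\gamma_1+\dots+\gamma_r=p$. With $S_r=X_1+\dots+X_r$, for any index $1\le k\le r$, $$\mathbb{E}\frac{X_1^{2\gamma_1}\cdots X_r^{2\gamma_r}}{\left(\frac1nS_r+1\right)^{p+1}}X_k^2=O(n^{p-r-\alpha+4})\quad(n\to\infty).$$ *)

theory Defs
  imports "HOL-Probability.Probability" "HOL-Library.Landau_Symbols"
begin

end

(* Write the numerator as a product of powers X_i ^ a_i with a_i = 2 \<gamma>_i + 2 [i = k]; then every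
   a_i \<ge> 2 and the a_i add up to 2p + 2. Let a_j be the largest exponent. All other exponents are
   at most p + 1, and the excess m = a_j - (p + 2) is either 0 or at most p + 2 - 2r. Since
   X_j \<le> S_r, the factor X_j ^ m is absorbed by the denominator at the price of n ^ m, and what is
   left is a product of independent moments of order at most p + 2 < p + \<alpha>, finite by the
   tail bound. Finally n ^ m = O(n ^ (p - r - \<alpha> + 4)) because \<alpha> \<le> 4 \<le> r + 2. *)

theory Submission
  imports Defs "HOL-Real_Asymp.Real_Asymp"
begin

lemma (in finite_measure) integrable_of_summable_tail:
  fixes Z :: "'a \<Rightarrow> real"
  assumes [measurable]: "Z \<in> borel_measurable M"
    and nonneg: "AE \<omega> in M. 0 \<le> Z \<omega>"
    and tail_summable: "summable (\<lambda>t. measure M {\<omega> \<in> space M. real t < Z \<omega>})"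
  shows "integrable M Z"
proof -
  define N where "N \<omega> = nat \<lceil>Z \<omega>\<rceil>" for \<omega>
  have [measurable]: "N \<in> measurable M (count_space UNIV)"
    unfolding N_def by measurable
  have "{\<omega> \<in> space M. t < N \<omega>} = {\<omega> \<in> space M. real t < Z \<omega>}" for t
    by (auto simp: N_def zless_nat_eq_int_zless less_ceiling_iff)
  then have "(\<integral>\<^sup>+\<omega>. of_nat (N \<omega>) \<partial>M) < \<infinity>"
    using tail_summable
    by (simp add: nn_integral_nat_function emeasure_eq_measure ennreal_suminf_neq_top less_top)
  moreover have "(\<integral>\<^sup>+\<omega>. ennreal (norm (Z \<omega>)) \<partial>M) \<le> (\<integral>\<^sup>+\<omega>. of_nat (N \<omega>) \<partial>M)"
    using nonneg
    by (intro nn_integral_mono_AE) (auto elim!: eventually_mono simp: N_def ennreal_of_nat_eq_real_of_nat)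
  ultimately show ?thesis
    by (intro integrableI_bounded) auto
qed

lemma (in finite_measure) integrable_power_of_tail_bigo:
  fixes Y :: "'a \<Rightarrow> real" and q :: real and D :: nat
  assumes [measurable]: "Y \<in> borel_measurable M"
    and nonneg: "AE \<omega> in M. 0 \<le> Y \<omega>"
    and tail: "(\<lambda>x. measure M {\<omega> \<in> space M. Y \<omega> \<ge> x}) \<in> O[at_top](\<lambda>x. x powr (-q))"
    and D: "real D < q"
  shows "integrable M (\<lambda>\<omega>. Y \<omega> ^ D)"
proof (cases "D = 0")
  case False
  define s where "s t = real t powr (1 / real D)" for t
  define Z where "Z \<omega> = max 0 (Y \<omega>) ^ D" for \<omega>
  have [measurable]: "Z \<in> borel_measurable M"
    unfolding Z_def by measurable
  have "filterlim s at_top sequentially"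
    unfolding s_def using False
    by (intro filterlim_compose[OF real_powr_at_top filterlim_real_sequentially]) simp
  then have "(\<lambda>t. measure M {\<omega> \<in> space M. Y \<omega> \<ge> s t}) \<in> O(\<lambda>t. s t powr (-q))"
    by (rule landau_o.big.compose[OF tail])
  also have "(\<lambda>t. s t powr (-q)) = (\<lambda>t. real t powr (-q / real D))"
    by (simp add: s_def powr_powr)
  finally have s_tail: "(\<lambda>t. measure M {\<omega> \<in> space M. Y \<omega> \<ge> s t}) \<in> O(\<lambda>t. real t powr (-q / real D))" .
  have "{\<omega> \<in> space M. real t < Z \<omega>} \<subseteq> {\<omega> \<in> space M. Y \<omega> \<ge> s t}" for t
  proof safe
    fix \<omega> assume "real t < Z \<omega>"
    moreover have "real t = s t ^ D"
      using False by (cases "t = 0") (simp_all add: s_def powr_realpow[symmetric] powr_powr)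
    ultimately have "s t < max 0 (Y \<omega>)"
      unfolding Z_def by (auto intro: power_less_imp_less_base)
    then show "s t \<le> Y \<omega>"
      using powr_ge_zero[of "real t" "1 / real D"] unfolding s_def by linarith
  qed
  then have "measure M {\<omega> \<in> space M. real t < Z \<omega>} \<le> measure M {\<omega> \<in> space M. Y \<omega> \<ge> s t}" for t
    by (rule finite_measure_mono) measurable
  then have "(\<lambda>t. measure M {\<omega> \<in> space M. real t < Z \<omega>}) \<in> O(\<lambda>t. measure M {\<omega> \<in> space M. Y \<omega> \<ge> s t})"
    by (intro landau_o.big_mono always_eventually allI) simp
  also note s_tail
  finally have Z_tail: "(\<lambda>t. measure M {\<omega> \<in> space M. real t < Z \<omega>}) \<in> O(\<lambda>t. real t powr (-q / real D))" .
  have "-q / real D < -1"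
    using False D by (simp add: field_simps)
  then have powr_summable: "summable (\<lambda>t. norm (real t powr (-q / real D)))"
    by (simp add: summable_real_powr_iff)
  have "integrable M Z"
    using summable_comparison_test_bigo[OF powr_summable Z_tail]
    by (intro integrable_of_summable_tail) (auto simp: Z_def)
  then show ?thesis
    by (rule integrable_cong_AE_imp) (use nonneg in \<open>auto elim!: eventually_mono simp: Z_def\<close>)
qed simp

lemma integrable_comp_iff_of_eq_distr:
  fixes X Y :: "'a \<Rightarrow> 'b::topological_space" and f :: "'b \<Rightarrow> 'c::{banach, second_countable_topology}"
  assumes [measurable]: "X \<in> borel_measurable M" "Y \<in> borel_measurable M" "f \<in> borel_measurable borel"
    and "distr M borel X = distr M borel Y"
  shows "integrable M (\<lambda>\<omega>. f (X \<omega>)) \<longleftrightarrow> integrable M (\<lambda>\<omega>. f (Y \<omega>))"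
proof -
  have "integrable M (\<lambda>\<omega>. f (X \<omega>)) \<longleftrightarrow> integrable (distr M borel X) f"
    using integrable_distr_eq[OF assms(1,3)] by simp
  also have "\<dots> \<longleftrightarrow> integrable M (\<lambda>\<omega>. f (Y \<omega>))"
    using integrable_distr_eq[OF assms(2,3)] assms(4) by simp
  finally show ?thesis .
qed

lemma (in prob_space) integrable_prod_powers_of_iid:
  fixes X :: "'i \<Rightarrow> 'a \<Rightarrow> real" and Y :: "'a \<Rightarrow> real" and d :: "'i \<Rightarrow> nat"
  assumes [measurable]: "\<And>i. X i \<in> borel_measurable M" "Y \<in> borel_measurable M"
    and "finite I" and indep: "indep_vars (\<lambda>_. borel) X I"
    and ident: "\<And>i. i \<in> I \<Longrightarrow> distr M borel (X i) = distr M borel Y"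
    and nonneg: "AE \<omega> in M. 0 \<le> Y \<omega>"
    and tail: "(\<lambda>x. measure M {\<omega> \<in> space M. Y \<omega> \<ge> x}) \<in> O[at_top](\<lambda>x. x powr (-q))"
    and d: "\<And>i. i \<in> I \<Longrightarrow> real (d i) < q"
  shows "integrable M (\<lambda>\<omega>. \<Prod>i\<in>I. X i \<omega> ^ d i)"
proof (rule indep_vars_integrable[OF \<open>finite I\<close>])
  show "indep_vars (\<lambda>_. borel) (\<lambda>i \<omega>. X i \<omega> ^ d i) I"
    using indep_vars_compose2[OF indep, where Y = "\<lambda>i x. x ^ d i" and N = "\<lambda>_. borel"] by simp
  show "integrable M (\<lambda>\<omega>. X i \<omega> ^ d i)" if "i \<in> I" for i
    using integrable_power_of_tail_bigo[OF _ nonneg tail d[OF that]]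
      integrable_comp_iff_of_eq_distr[OF _ _ _ ident[OF that], of "\<lambda>x. x ^ d i"]
    by simp
qed

lemma power_div_one_plus_power_le:
  fixes x s n :: real
  assumes "0 \<le> x" "x \<le> s" "0 < n" "m \<le> q"
  shows "x ^ m / (s / n + 1) ^ q \<le> n ^ m"
proof -
  have "x ^ m = n ^ m * (x / n) ^ m"
    using \<open>0 < n\<close> by (simp add: power_divide)
  also have "\<dots> \<le> n ^ m * (s / n + 1) ^ m"
    using assms divide_right_mono[OF \<open>x \<le> s\<close>, of n] by (intro mult_left_mono power_mono) auto
  also have "\<dots> \<le> n ^ m * (s / n + 1) ^ q"
    using assms by (intro mult_left_mono power_increasing) auto
  moreover have "0 < (s / n + 1) ^ q"
    using assms by (simp add: add_nonneg_pos)
  ultimately show ?thesis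
    by (simp add: pos_divide_le_eq)
qed

lemma prod_power_div_sum_power_le:
  fixes x :: "'i \<Rightarrow> real" and a :: "'i \<Rightarrow> nat" and n :: real
  assumes "finite I" "j \<in> I" "\<And>i. i \<in> I \<Longrightarrow> 0 \<le> x i"
    and small: "\<And>i. i \<in> I - {j} \<Longrightarrow> a i \<le> c" and "a j - c \<le> q" "0 < n"
  shows "(\<Prod>i\<in>I. x i ^ a i) / ((\<Sum>i\<in>I. x i) / n + 1) ^ q
           \<le> n ^ (a j - c) * (\<Prod>i\<in>I. x i ^ min (a i) c)"
proof -
  have "(\<Prod>i\<in>I. x i ^ a i) = (\<Prod>i\<in>I. x i ^ min (a i) c * (if i = j then x j ^ (a j - c) else 1))"
    using small by (intro prod.cong refl) (auto simp: power_add[symmetric] min_def)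
  also have "\<dots> = x j ^ (a j - c) * (\<Prod>i\<in>I. x i ^ min (a i) c)"
    using assms by (simp add: prod.distrib prod.delta)
  finally have prod_split: "(\<Prod>i\<in>I. x i ^ a i) = x j ^ (a j - c) * (\<Prod>i\<in>I. x i ^ min (a i) c)" .
  have "(\<Prod>i\<in>I. x i ^ a i) / ((\<Sum>i\<in>I. x i) / n + 1) ^ q
        = (\<Prod>i\<in>I. x i ^ min (a i) c) * (x j ^ (a j - c) / ((\<Sum>i\<in>I. x i) / n + 1) ^ q)"
    by (simp add: prod_split)
  also have "\<dots> \<le> (\<Prod>i\<in>I. x i ^ min (a i) c) * n ^ (a j - c)"
    using assms by (intro mult_left_mono power_div_one_plus_power_le member_le_sum prod_nonneg) auto
  finally show ?thesis
    by (simp add: mult.commute)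
qed

lemma prod_power_mult_power_eq:
  fixes x :: "'i \<Rightarrow> 'b::comm_monoid_mult"
  assumes "finite I" "k \<in> I"
  shows "(\<Prod>i\<in>I. x i ^ e i) * x k ^ b = (\<Prod>i\<in>I. x i ^ (e i + (if i = k then b else 0)))"
  using assms by (simp add: power_add prod.distrib if_distrib[of "\<lambda>e. _ ^ e"] prod.If_cases Int_absorb1)

lemma obtain_largest_summand:
  fixes a :: "'i \<Rightarrow> nat"
  assumes "finite I" "I \<noteq> {}" and lower: "\<And>i. i \<in> I \<Longrightarrow> b \<le> a i"
  obtains j where "j \<in> I" "\<And>i. i \<in> I - {j} \<Longrightarrow> 2 * a i \<le> sum a I"
    "a j + (card I - 1) * b \<le> sum a I"
proof -
  obtain j where j: "j \<in> I" "\<And>i. i \<in> I \<Longrightarrow> a i \<le> a j"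
    using Max_in[of "a ` I"] Max_ge[of "a ` I"] assms(1,2) by fastforce
  have "2 * a i \<le> sum a I" if "i \<in> I - {j}" for i
  proof -
    have "2 * a i \<le> (\<Sum>l\<in>{i, j}. a l)"
      using that j by auto
    also have "\<dots> \<le> sum a I"
      using that j assms by (intro sum_mono2) auto
    finally show ?thesis .
  qed
  moreover have "card (I - {j}) * b \<le> sum a (I - {j})"
    using lower sum_mono[of "I - {j}" "\<lambda>_. b" a] by simp
  then have "a j + (card I - 1) * b \<le> sum a I"
    using j assms by (simp add: sum.remove)
  ultimately show thesis
    using that j(1) by blast
qed

lemma (in prob_space) integrable_expectation_bigo_of_le_power_mult:
  fixes F :: "nat \<Rightarrow> 'a \<Rightarrow> real" and G :: "'a \<Rightarrow> real" and e :: real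
  assumes [measurable]: "\<And>n. F n \<in> borel_measurable M" and G: "integrable M G"
    and bound: "\<And>n. n \<ge> 1 \<Longrightarrow> AE \<omega> in M. 0 \<le> F n \<omega> \<and> F n \<omega> \<le> real n ^ m * G \<omega>"
    and "real m \<le> e"
  shows "\<forall>n\<ge>1. integrable M (F n)"
    and "(\<lambda>n. expectation (F n)) \<in> O(\<lambda>n. real n powr e)"
proof -
  have int: "integrable M (F n)" if "n \<ge> 1" for n
  proof (rule Bochner_Integration.integrable_bound[OF integrable_mult_right[OF G]])
    show "AE \<omega> in M. norm (F n \<omega>) \<le> norm (real n ^ m * G \<omega>)"
      using bound[OF that] by eventually_elim auto
  qed simp
  then show "\<forall>n\<ge>1. integrable M (F n)"
    by blast
  have "AE \<omega> in M. 0 \<le> G \<omega>"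
    using bound[OF order_refl] by eventually_elim auto
  then have "0 \<le> expectation G"
    by (rule integral_nonneg_AE)
  have "norm (expectation (F n)) \<le> expectation G * norm (real n powr e)" if "n \<ge> 1" for n
  proof -
    have "norm (expectation (F n)) = expectation (F n)"
      unfolding real_norm_def using bound[OF that]
      by (intro abs_of_nonneg integral_nonneg_AE) (elim eventually_mono, simp)
    also have "\<dots> \<le> real n ^ m * expectation G"
      using bound[OF that] int[OF that] G
      by (subst integral_mult_right_zero[symmetric], intro integral_mono_AE) (auto elim: eventually_mono)
    also have "\<dots> \<le> real n powr e * expectation G"
      using that \<open>real m \<le> e\<close> \<open>0 \<le> expectation G\<close>
      by (intro mult_right_mono) (simp_all add: powr_realpow[symmetric] powr_mono)
    finally show ?thesis
      by (simp add: mult.commute)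
  qed
  then show "(\<lambda>n. expectation (F n)) \<in> O(\<lambda>n. real n powr e)"
    by (intro bigoI eventually_sequentiallyI)
qed

theorem lemma10:
  fixes M :: "'a measure" and X :: "nat \<Rightarrow> 'a \<Rightarrow> real"
    and p r k :: nat and \<alpha> :: real and \<gamma> :: "nat \<Rightarrow> nat"
  assumes "prob_space M"
    and rv: "\<And>i. X i \<in> borel_measurable M"
    and indep: "prob_space.indep_vars M (\<lambda>_. borel) X UNIV"
    and ident: "\<And>i. distr M borel (X i) = distr M borel (X 0)"
    and pos: "\<And>i. AE \<omega> in M. X i \<omega> > 0"
    and mean: "integrable M (X 0)" "prob_space.expectation M (X 0) = 1"
    and p: "p \<ge> 2" and \<alpha>: "2 < \<alpha>" "\<alpha> \<le> 4"
    and tail: "(\<lambda>x::real. measure M {\<omega> \<in> space M. X 0 \<omega> \<ge> x})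
                 \<in> O[at_top](\<lambda>x. x powr (- (real p + \<alpha>)))"
    and r: "2 \<le> r" "r \<le> p"
    and \<gamma>pos: "\<And>i. i \<in> {1..r} \<Longrightarrow> \<gamma> i > 0"
    and \<gamma>sum: "(\<Sum>i=1..r. \<gamma> i) = p"
    and k: "k \<in> {1..r}"
  shows "(\<forall>n::nat. n \<ge> 1 \<longrightarrow> integrable M (\<lambda>\<omega>.
            (\<Prod>i=1..r. X i \<omega> ^ (2 * \<gamma> i)) * X k \<omega> ^ 2
              / ((\<Sum>i=1..r. X i \<omega>) / real n + 1) ^ (p + 1)))
       \<and> (\<lambda>n::nat. prob_space.expectation M (\<lambda>\<omega>.
            (\<Prod>i=1..r. X i \<omega> ^ (2 * \<gamma> i)) * X k \<omega> ^ 2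
              / ((\<Sum>i=1..r. X i \<omega>) / real n + 1) ^ (p + 1)))
         \<in> O(\<lambda>n. real n powr (real p - real r - \<alpha> + 4))"
proof -
  interpret prob_space M by fact
  define a where "a i = 2 * \<gamma> i + (if i = k then 2 else 0)" for i
  have a_sum: "(\<Sum>i=1..r. a i) = 2 * p + 2"
    using k \<gamma>sum by (simp add: a_def sum.distrib sum_distrib_left[symmetric])
  have a_ge: "2 \<le> a i" if "i \<in> {1..r}" for i
    using \<gamma>pos[OF that] by (simp add: a_def)
  obtain j where j: "j \<in> {1..r}" and half: "\<And>i. i \<in> {1..r} - {j} \<Longrightarrow> 2 * a i \<le> 2 * p + 2"
    and large: "a j + (card {1..r} - 1) * 2 \<le> 2 * p + 2"
    by (rule obtain_largest_summand[of "{1..r}" 2 a, unfolded a_sum]) (use a_ge r in auto)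
  have small: "a i \<le> p + 2" if "i \<in> {1..r} - {j}" for i
    using half[OF that] by simp
  define m where "m = a j - (p + 2)"
  have m: "m \<le> p + 1" "real m \<le> real p - real r - \<alpha> + 4"
    using large r \<alpha> by (auto simp: m_def)
  have G: "integrable M (\<lambda>\<omega>. \<Prod>i=1..r. X i \<omega> ^ min (a i) (p + 2))"
    using pos[of 0] \<alpha>
    by (intro integrable_prod_powers_of_iid[OF rv rv _ indep_vars_subset[OF indep] ident _ tail])
       (auto elim: eventually_mono)
  have pos_all: "AE \<omega> in M. \<forall>i. 0 < X i \<omega>"
    using pos by (simp add: AE_all_countable)
  define F where "F n \<omega> = (\<Prod>i=1..r. X i \<omega> ^ (2 * \<gamma> i)) * X k \<omega> ^ 2
              / ((\<Sum>i=1..r. X i \<omega>) / real n + 1) ^ (p + 1)" for n \<omega>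
  have F_eq: "F n \<omega> = (\<Prod>i=1..r. X i \<omega> ^ a i) / ((\<Sum>i=1..r. X i \<omega>) / real n + 1) ^ (p + 1)" for n \<omega>
    unfolding F_def a_def by (subst prod_power_mult_power_eq[OF _ k]) simp_all
  have "AE \<omega> in M. 0 \<le> F n \<omega> \<and> F n \<omega> \<le> real n ^ m * (\<Prod>i=1..r. X i \<omega> ^ min (a i) (p + 2))"
    if "n \<ge> 1" for n
    using pos_all
  proof eventually_elim
    case (elim \<omega>)
    have "F n \<omega> \<le> real n ^ m * (\<Prod>i=1..r. X i \<omega> ^ min (a i) (p + 2))"
      unfolding F_eq m_def
      by (rule prod_power_div_sum_power_le) (use elim j small m that in \<open>auto simp: m_def less_imp_le\<close>)
    moreover have "0 \<le> F n \<omega>"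
      unfolding F_eq using elim by (simp add: less_imp_le prod_nonneg sum_nonneg)
    ultimately show ?case
      by simp
  qed
  then show ?thesis
    using integrable_expectation_bigo_of_le_power_mult[OF _ G _ m(2), of F] rv
    unfolding F_def[abs_def] by auto
qed

end
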